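(* Let $G$ be a graph, $X\subseteq V(G)$ a set such that $F := G-X$ is a pseudoforest, and $k$ an integer. If $G$ has an independent set of size at least $k$, then $G$ has an independent set $I$ with $|I|\ge k$ that contains no unnecessary triple, i.e. there is no unnecessary triple ${}_3X\subseteq X$ with ${}_3X \subseteq I$.
   Context: All graphs are finite, simple and undirected; a pseudoforest is a graph each of whose connected components contains at most one cycle. An anchor triangle is a connected component $P$ of $F=G-X$ with $V(P)=\{p_1,p_2,p_3\}$ such that there are vertices $x_1,x_2,x_3\in X$ with $N_G(p_1)=\{p_2,p_3,x_1\}$, $N_G(p_2)=\{p_1,p_3,x_2\}$, $N_G(p_3)=\{p_1,p_2,x_3\}$. A triple (3-element set) ${}_3X\subseteq X$ is unnecessary if there exists an anchor triangle $P$ with $N_G(V(P)) = {}_3X$, where $N_G(S)$ denotes the set of vertices outside $S$ adjacent to some vertex of $S$. *)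

theory Defs
  imports Main
begin

definition graph :: "'a set \<Rightarrow> ('a \<Rightarrow> 'a \<Rightarrow> bool) \<Rightarrow> bool" where
  "graph V E \<longleftrightarrow> finite V \<and> (\<forall>x y. E x y \<longrightarrow> x \<in> V \<and> y \<in> V)
     \<and> (\<forall>x y. E x y \<longrightarrow> E y x) \<and> (\<forall>x. \<not> E x x)"

definition nbhd :: "('a \<Rightarrow> 'a \<Rightarrow> bool) \<Rightarrow> 'a \<Rightarrow> 'a set" where
  "nbhd E v = {u. E v u}"

definition set_nbhd :: "('a \<Rightarrow> 'a \<Rightarrow> bool) \<Rightarrow> 'a set \<Rightarrow> 'a set" where
  "set_nbhd E S = {u. u \<notin> S \<and> (\<exists>v\<in>S. E v u)}"

definition induced :: "('a \<Rightarrow> 'a \<Rightarrow> bool) \<Rightarrow> 'a set \<Rightarrow> 'a \<Rightarrow> 'a \<Rightarrow> bool" where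
  "induced E W = (\<lambda>x y. x \<in> W \<and> y \<in> W \<and> E x y)"

definition components :: "'a set \<Rightarrow> ('a \<Rightarrow> 'a \<Rightarrow> bool) \<Rightarrow> 'a set set" where
  "components W E = (\<lambda>v. {u \<in> W. (induced E W)\<^sup>*\<^sup>* v u}) ` W"

definition is_cycle :: "'a set \<Rightarrow> ('a \<Rightarrow> 'a \<Rightarrow> bool) \<Rightarrow> 'a list \<Rightarrow> bool" where
  "is_cycle C E cs \<longleftrightarrow> length cs \<ge> 3 \<and> distinct cs \<and> set cs \<subseteq> C
     \<and> (\<forall>i < length cs. E (cs ! i) (cs ! ((i + 1) mod length cs)))"

definition cycle_edges :: "'a list \<Rightarrow> 'a set set" where
  "cycle_edges cs = {{cs ! i, cs ! ((i + 1) mod length cs)} | i. i < length cs}"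

text \<open>Pseudoforest: every connected component contains at most one cycle
(cycles identified by their edge sets).\<close>
definition pseudoforest :: "'a set \<Rightarrow> ('a \<Rightarrow> 'a \<Rightarrow> bool) \<Rightarrow> bool" where
  "pseudoforest W E \<longleftrightarrow> (\<forall>C \<in> components W E. \<forall>cs ds.
      is_cycle C E cs \<and> is_cycle C E ds \<longrightarrow> cycle_edges cs = cycle_edges ds)"

definition anchor_triangle ::
  "'a set \<Rightarrow> ('a \<Rightarrow> 'a \<Rightarrow> bool) \<Rightarrow> 'a set \<Rightarrow> 'a set \<Rightarrow> bool" where
  "anchor_triangle V E X P \<longleftrightarrow> P \<in> components (V - X) E \<and>
     (\<exists>p1 p2 p3 x1 x2 x3. P = {p1, p2, p3} \<and> p1 \<noteq> p2 \<and> p1 \<noteq> p3 \<and> p2 \<noteq> p3 \<and>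
        x1 \<in> X \<and> x2 \<in> X \<and> x3 \<in> X \<and>
        nbhd E p1 = {p2, p3, x1} \<and> nbhd E p2 = {p1, p3, x2} \<and> nbhd E p3 = {p1, p2, x3})"

definition unnecessary_triple ::
  "'a set \<Rightarrow> ('a \<Rightarrow> 'a \<Rightarrow> bool) \<Rightarrow> 'a set \<Rightarrow> 'a set \<Rightarrow> bool" where
  "unnecessary_triple V E X T \<longleftrightarrow> T \<subseteq> X \<and> card T = 3 \<and>
     (\<exists>P. anchor_triangle V E X P \<and> set_nbhd E P = T)"

definition independent_set :: "'a set \<Rightarrow> ('a \<Rightarrow> 'a \<Rightarrow> bool) \<Rightarrow> 'a set \<Rightarrow> bool" where
  "independent_set V E I \<longleftrightarrow> I \<subseteq> V \<and> (\<forall>x\<in>I. \<forall>y\<in>I. \<not> E x y)"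

end

theory Submission
  imports Defs
begin

text \<open>Among the independent sets of size at least k choose one, I, meeting X in as few
vertices as possible. If I contained the neighbourhood of an anchor triangle
{p1, p2, p3}, then p2 and p3 would be excluded by their neighbours in X, so the only
neighbour of p1 in I would be its anchor x1 \<in> X; exchanging x1 for p1 keeps I
independent and of the same size but meets X in one vertex fewer.\<close>

lemma independent_set_exchange:
  assumes "graph V E" "independent_set V E I" "p \<in> V" "nbhd E p \<inter> I \<subseteq> {x}"
  shows "independent_set V E (insert p (I - {x}))"
proof -
  have no_edge_p: "\<not> E p v" if "v \<in> insert p (I - {x})" for v
    using that assms(1,4) unfolding graph_def nbhd_def by auto
  show ?thesis
    using assms(2,3) no_edge_p assms(1)
    unfolding independent_set_def graph_def by blast
qed

lemma card_exchange:
  assumes "finite I" "x \<in> I" "p \<notin> I"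
  shows "card (insert p (I - {x})) = card I"
  using assms by (metis DiffD1 card_Suc_Diff1 card_insert_disjoint finite_Diff)

lemma anchor_triangle_private_neighbour:
  assumes "anchor_triangle V E X P" "independent_set V E I" "set_nbhd E P \<subseteq> I"
  obtains p x where "p \<in> V - X" "p \<notin> I" "x \<in> X" "nbhd E p \<inter> I = {x}"
proof -
  obtain p1 p2 p3 x1 x2 x3 where P: "P = {p1, p2, p3}" and x: "x1 \<in> X" "x2 \<in> X" "x3 \<in> X"
    and n1: "nbhd E p1 = {p2, p3, x1}" and n2: "nbhd E p2 = {p1, p3, x2}"
    and n3: "nbhd E p3 = {p1, p2, x3}" and comp: "P \<in> components (V - X) E"
    using assms(1) unfolding anchor_triangle_def by blast
  have "P \<subseteq> V - X"
    using comp unfolding components_def by auto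
  then have anchors_in_I: "x1 \<in> I" "x2 \<in> I" "x3 \<in> I"
    using assms(3) x n1 n2 n3 P unfolding set_nbhd_def nbhd_def by auto
  have edges: "E p1 x1" "E p2 x2" "E p3 x3"
    using n1 n2 n3 unfolding nbhd_def by auto
  have "p1 \<notin> I" "p2 \<notin> I" "p3 \<notin> I"
    using assms(2) anchors_in_I edges unfolding independent_set_def by blast+
  then have "nbhd E p1 \<inter> I = {x1}"
    using n1 anchors_in_I by auto
  then show thesis
    using that \<open>P \<subseteq> V - X\<close> P \<open>p1 \<notin> I\<close> x(1) by blast
qed

lemma anchor_triangle_exchange:
  assumes "graph V E" "independent_set V E I" "anchor_triangle V E X P" "set_nbhd E P \<subseteq> I"
  obtains J where "independent_set V E J" "card J = card I" "card (J \<inter> X) < card (I \<inter> X)"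
proof -
  have "finite I"
    using assms(1,2) finite_subset unfolding independent_set_def graph_def by blast
  obtain p x where p: "p \<in> V - X" "p \<notin> I" and x: "x \<in> X" "nbhd E p \<inter> I = {x}"
    using anchor_triangle_private_neighbour[OF assms(3,2,4)] by blast
  then have "x \<in> I" by blast
  define J where "J = insert p (I - {x})"
  have "independent_set V E J"
    using independent_set_exchange[OF assms(1,2)] p x(2) unfolding J_def by blast
  moreover have "card J = card I"
    using card_exchange[OF \<open>finite I\<close> \<open>x \<in> I\<close> p(2)] unfolding J_def .
  moreover have "J \<inter> X = I \<inter> X - {x}"
    using p unfolding J_def by blast
  then have "card (J \<inter> X) < card (I \<inter> X)"
    using \<open>finite I\<close> \<open>x \<in> I\<close> x(1) by (metis IntI card_Diff1_less finite_Int)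
  ultimately show thesis
    using that by blast
qed

theorem lemma2:
  fixes V :: "'a set" and E :: "'a \<Rightarrow> 'a \<Rightarrow> bool" and X :: "'a set" and k :: int
  assumes "graph V E"
    and "X \<subseteq> V"
    and "pseudoforest (V - X) E"
    and "\<exists>I. independent_set V E I \<and> int (card I) \<ge> k"
  shows "\<exists>I. independent_set V E I \<and> int (card I) \<ge> k \<and>
           \<not> (\<exists>T. unnecessary_triple V E X T \<and> T \<subseteq> I)"
proof -
  define Q where "Q I \<longleftrightarrow> independent_set V E I \<and> int (card I) \<ge> k" for I
  define I where "I = arg_min (\<lambda>I. card (I \<inter> X)) Q"
  have QI: "Q I" and min: "\<And>J. Q J \<Longrightarrow> card (I \<inter> X) \<le> card (J \<inter> X)"
    using arg_min_nat_lemma[of Q _ "\<lambda>I. card (I \<inter> X)"] assms(4) unfolding I_def Q_def by blast+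
  have "\<not> set_nbhd E P \<subseteq> I" if anchor: "anchor_triangle V E X P" for P
  proof
    assume "set_nbhd E P \<subseteq> I"
    then obtain J where "Q J" "card (J \<inter> X) < card (I \<inter> X)"
      using anchor_triangle_exchange[OF assms(1) _ anchor] QI unfolding Q_def by (metis (no_types))
    then show False
      using min leD by blast
  qed
  then show ?thesis
    using QI unfolding Q_def unnecessary_triple_def by blast
qed

end
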